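(* Let $f:\mathcal R\to\mathrm{Nil}_3$ be a conformal minimal immersion which is equivariant, i.e. there are one-parameter groups $\gamma_t\in\mathrm{Aut}(\mathcal R)$ and $\rho_t\in\mathrm{Iso}_\circ(\mathrm{Nil}_3)$, $\rho_t$ not identically the identity, with $f\circ\gamma_t=\rho_t\circ f$ for all $t$. Then $f$ is either a helicoidal surface (its image is invariant under a one-parameter group of helicoidal motions $\rho^{(c,\alpha)}_t$, possibly with pitch $c=0$) or a translation invariant surface (its image is invariant under a one-parameter group of translations $t\mapsto(ta_1,ta_2,tc)\in\mathrm{Nil}_3$ acting by left multiplication).
   Context: $\mathrm{Nil}_3$ denotes $\mathbb R^3$ with the group law $(a_1,a_2,a_3)\cdot(x_1,x_2,x_3)=(a_1+x_1,a_2+x_2,a_3+x_3+\tfrac12(a_1x_2-a_2x_1))$ and the left-invariant metric $dx_1^2+dx_2^2+(dx_3+\tfrac12(x_2dx_1-x_1dx_2))^2$. $\mathrm{Iso}_\circ(\mathrm{Nil}_3)\cong\mathrm{Nil}_3\rtimes\mathrm U_1$, where $(a,e^{i\theta})$ acts by $(a,e^{i\theta}).(x_1,x_2,x_3)=a\cdot(\cos\theta\, x_1-\sin\theta\, x_2,\ \sin\theta\, x_1+\cos\theta\, x_2,\ x_3)$; $a\in\mathrm{Nil}_3$ is identified with $(a,1)$ and $e^{i\theta}$ with $((0,0,0),e^{i\theta})$. A helicoidal motion with pitch $c$ along the axis through $\alpha=(a_1,a_2,0)$ is the one-parameter group $\rho^{(c,\alpha)}_t=\alpha\,(0,0,tc)\,e^{it}\,\alpha^{-1}$.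 *)

theory Defs
  imports "HOL-Analysis.Analysis"
begin

type_synonym R3 = "real^3"

definition nil_mult :: "R3 \<Rightarrow> R3 \<Rightarrow> R3" where
  "nil_mult a x = vector [a$1 + x$1, a$2 + x$2,
                          a$3 + x$3 + (a$1 * x$2 - a$2 * x$1) / 2]"

definition nil_inv :: "R3 \<Rightarrow> R3" where
  "nil_inv a = vector [- a$1, - a$2, - a$3]"

definition rot :: "complex \<Rightarrow> R3 \<Rightarrow> R3" where
  "rot u x = vector [Re u * x$1 - Im u * x$2, Im u * x$1 + Re u * x$2, x$3]"

text \<open>Elements of Iso_0(Nil_3) = Nil_3 semidirect U_1 are pairs (a,u) with norm u = 1.\<close>
type_synonym iso = "R3 \<times> complex"

definition iso_act :: "iso \<Rightarrow> R3 \<Rightarrow> R3" where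
  "iso_act g x = nil_mult (fst g) (rot (snd g) x)"

definition iso_mult :: "iso \<Rightarrow> iso \<Rightarrow> iso" where
  "iso_mult g h = (nil_mult (fst g) (rot (snd g) (fst h)), snd g * snd h)"

definition iso_one :: iso where
  "iso_one = (0, 1)"

definition is_iso :: "iso \<Rightarrow> bool" where
  "is_iso g \<longleftrightarrow> norm (snd g) = 1"

definition iso_one_param :: "(real \<Rightarrow> iso) \<Rightarrow> bool" where
  "iso_one_param \<rho> \<longleftrightarrow> (\<forall>t. is_iso (\<rho> t)) \<and> \<rho> 0 = iso_one \<and>
     (\<forall>s t. \<rho> (s + t) = iso_mult (\<rho> s) (\<rho> t)) \<and> continuous_on UNIV \<rho>"

definition helicoidal :: "real \<Rightarrow> R3 \<Rightarrow> real \<Rightarrow> iso" where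
  "helicoidal c \<alpha> t =
     iso_mult (iso_mult (iso_mult (\<alpha>, 1) (vector [0, 0, t * c], 1)) (0, cis t)) (nil_inv \<alpha>, 1)"

definition nil_metric :: "R3 \<Rightarrow> real^3^3" where
  "nil_metric x = vector [
      vector [1 + (x$2)^2 / 4, - x$1 * x$2 / 4, x$2 / 2],
      vector [- x$1 * x$2 / 4, 1 + (x$1)^2 / 4, - x$1 / 2],
      vector [x$2 / 2, - x$1 / 2, 1]]"

definition nil_inner :: "R3 \<Rightarrow> R3 \<Rightarrow> R3 \<Rightarrow> real" where
  "nil_inner x X Y = X \<bullet> (nil_metric x *v Y)"

definition metric_partial :: "3 \<Rightarrow> 3 \<Rightarrow> 3 \<Rightarrow> R3 \<Rightarrow> real" where
  "metric_partial l i j x = deriv (\<lambda>s. nil_metric (x + s *\<^sub>R axis l 1) $ i $ j) 0"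

definition christoffel :: "3 \<Rightarrow> 3 \<Rightarrow> 3 \<Rightarrow> R3 \<Rightarrow> real" where
  "christoffel k i j x = (\<Sum>l\<in>UNIV. matrix_inv (nil_metric x) $ k $ l *
       (metric_partial i j l x + metric_partial j i l x - metric_partial l i j x)) / 2"

definition christ_quad :: "R3 \<Rightarrow> R3 \<Rightarrow> R3" where
  "christ_quad x X = (\<chi> k. \<Sum>i\<in>UNIV. \<Sum>j\<in>UNIV. christoffel k i j x * X$i * X$j)"

definition d_u :: "(complex \<Rightarrow> R3) \<Rightarrow> complex \<Rightarrow> R3" where
  "d_u F z = frechet_derivative F (at z) 1"

definition d_v :: "(complex \<Rightarrow> R3) \<Rightarrow> complex \<Rightarrow> R3" where
  "d_v F z = frechet_derivative F (at z) \<i>"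

text \<open>F is C^2 on the open set Omega, conformal, immersive, and harmonic as a map
  into Nil_3 (vanishing tension field), which for conformal immersions is minimality.\<close>
definition conformal_minimal_local :: "(complex \<Rightarrow> R3) \<Rightarrow> complex set \<Rightarrow> bool" where
  "conformal_minimal_local F \<Omega> \<longleftrightarrow>
     F differentiable_on \<Omega> \<and> d_u F differentiable_on \<Omega> \<and> d_v F differentiable_on \<Omega> \<and>
     continuous_on \<Omega> (d_u (d_u F)) \<and> continuous_on \<Omega> (d_v (d_u F)) \<and>
     continuous_on \<Omega> (d_u (d_v F)) \<and> continuous_on \<Omega> (d_v (d_v F)) \<and>
     (\<forall>z\<in>\<Omega>.
        (\<forall>a b. a *\<^sub>R d_u F z + b *\<^sub>R d_v F z = 0 \<longrightarrow> a = 0 \<and> b = 0) \<and>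
        nil_inner (F z) (d_u F z) (d_u F z) = nil_inner (F z) (d_v F z) (d_v F z) \<and>
        nil_inner (F z) (d_u F z) (d_v F z) = 0 \<and>
        d_u (d_u F) z + d_v (d_v F) z
          + christ_quad (F z) (d_u F z) + christ_quad (F z) (d_v F z) = 0)"

definition riemann_surface :: "'a topology \<Rightarrow> ('a set \<times> ('a \<Rightarrow> complex)) set \<Rightarrow> bool" where
  "riemann_surface X A \<longleftrightarrow>
     Hausdorff_space X \<and> connected_space X \<and> topspace X \<noteq> {} \<and>
     (\<Union>(U, \<phi>)\<in>A. U) = topspace X \<and>
     (\<forall>(U, \<phi>)\<in>A. openin X U \<and> open (\<phi> ` U) \<and>
        homeomorphic_map (subtopology X U) (top_of_set (\<phi> ` U)) \<phi>) \<and>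
     (\<forall>(U, \<phi>)\<in>A. \<forall>(V, \<psi>)\<in>A. (\<psi> \<circ> inv_into U \<phi>) holomorphic_on (\<phi> ` (U \<inter> V)))"

definition rs_holomorphic :: "'a topology \<Rightarrow> ('a set \<times> ('a \<Rightarrow> complex)) set \<Rightarrow> ('a \<Rightarrow> 'a) \<Rightarrow> bool" where
  "rs_holomorphic X A h \<longleftrightarrow> continuous_map X X h \<and>
     (\<forall>(U, \<phi>)\<in>A. \<forall>(V, \<psi>)\<in>A.
        (\<psi> \<circ> h \<circ> inv_into U \<phi>) holomorphic_on (\<phi> ` (U \<inter> {p \<in> topspace X. h p \<in> V})))"

definition rs_automorphism :: "'a topology \<Rightarrow> ('a set \<times> ('a \<Rightarrow> complex)) set \<Rightarrow> ('a \<Rightarrow> 'a) \<Rightarrow> bool" where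
  "rs_automorphism X A h \<longleftrightarrow> rs_holomorphic X A h \<and>
     (\<exists>g. rs_holomorphic X A g \<and> (\<forall>p\<in>topspace X. g (h p) = p \<and> h (g p) = p))"

definition rs_aut_one_param :: "'a topology \<Rightarrow> ('a set \<times> ('a \<Rightarrow> complex)) set \<Rightarrow> (real \<Rightarrow> 'a \<Rightarrow> 'a) \<Rightarrow> bool" where
  "rs_aut_one_param X A \<gamma> \<longleftrightarrow> (\<forall>t. rs_automorphism X A (\<gamma> t)) \<and>
     (\<forall>p\<in>topspace X. \<gamma> 0 p = p) \<and>
     (\<forall>s t. \<forall>p\<in>topspace X. \<gamma> (s + t) p = \<gamma> s (\<gamma> t p)) \<and>
     continuous_map (prod_topology euclideanreal X) X (\<lambda>(t, p). \<gamma> t p)"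

definition conformal_minimal_immersion ::
  "'a topology \<Rightarrow> ('a set \<times> ('a \<Rightarrow> complex)) set \<Rightarrow> ('a \<Rightarrow> R3) \<Rightarrow> bool" where
  "conformal_minimal_immersion X A f \<longleftrightarrow>
     (\<forall>(U, \<phi>)\<in>A. conformal_minimal_local (f \<circ> inv_into U \<phi>) (\<phi> ` U))"

end

theory Submission
  imports Defs
begin

(* A one-parameter group \<rho> t = (a t, u t) of Iso_0(Nil_3) is classified by its rotational
   part u, a continuous homomorphism into the unit circle, hence u t = cis (\<omega> t).
   If \<omega> = 0, then a is a continuous homomorphism into Nil_3; its horizontal part is additive,
   hence linear, which makes the vertical part additive too, so \<rho> is a group of translations.
   If \<omega> \<noteq> 0, rescale time so that \<omega> = 1. The cocycle identity a (s + t) = nil_mult (a s) (rot (cis s) (a t)),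
   read for (s, t) and (t, s) with t = \<pi>, forces the horizontal part of a t to be
   \<beta> - e^(it) \<beta>; the vertical part corrected by sin t |\<beta>|^2 / 2 is then additive, hence linear,
   and \<rho> is the helicoidal group with axis through \<beta>. Equivariance f (\<gamma> t p) = \<rho> t (f p)
   makes the image of f invariant under \<rho>. *)

lemma additive_continuous_imp_scaleR:
  fixes G :: "real \<Rightarrow> 'b::real_normed_vector"
  assumes add: "\<And>x y. G (x + y) = G x + G y" and cont: "continuous_on UNIV G"
  shows "G x = x *\<^sub>R G 1"
proof -
  interpret additive G by (rule additive.intro) (rule add)
  have int_mult: "G (of_int m * y) = of_int m *\<^sub>R G y" for m y
    by (induction m rule: int_induct[where k = 0])
      (simp_all add: zero add diff distrib_right left_diff_distrib scaleR_add_left scaleR_diff_left)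
  have "G q = q *\<^sub>R G 1" if rational: "q \<in> \<rat>" for q
  proof -
    obtain a b :: int where b: "b > 0" and q: "q = of_int a / of_int b"
      using Rats_cases'[OF rational] by blast
    have "G q = inverse (of_int b) *\<^sub>R (of_int b *\<^sub>R G q)"
      using b by simp
    also have "of_int b *\<^sub>R G q = of_int a *\<^sub>R G 1"
      using int_mult[of b q] int_mult[of a 1] b q by simp
    finally show ?thesis
      using q by (simp add: divide_inverse mult.commute)
  qed
  then have "\<rat> \<subseteq> {y. G y = y *\<^sub>R G 1}" by blast
  moreover have "closed {y. G y = y *\<^sub>R G 1}"
    by (intro closed_Collect_eq cont continuous_intros)
  ultimately have "closure \<rat> \<subseteq> {y. G y = y *\<^sub>R G 1}"
    by (rule closure_minimal)
  then show ?thesis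
    using Rats_closure_real by blast
qed

lemma continuous_circle_homomorphism_eq_cis:
  fixes u :: "real \<Rightarrow> complex"
  assumes norm_u: "\<And>t. norm (u t) = 1" and hom: "\<And>s t. u (s + t) = u s * u t"
    and cont: "continuous_on UNIV u"
  obtains \<omega> where "\<And>t. u t = cis (\<omega> * t)"
proof -
  have nonzero: "u t \<noteq> 0" for t
    using norm_u[of t] by auto
  obtain g where g_cont: "continuous_on UNIV g" and u_exp: "\<And>t. u t = exp (g t)"
    using continuous_logarithm_on_contractible[OF cont convex_imp_contractible[OF convex_UNIV]] nonzero
    by (metis UNIV_I)
  have g_cocycle: "g (s + t) - g s - g t = - g 0" for s t
  proof -
    define h where "h = (\<lambda>t. g (s + t) - g s - g t)"
    have exp_h: "exp (h t) = 1" for t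
      using hom[of s t] nonzero[of s] nonzero[of t] by (simp add: h_def exp_diff u_exp)
    have "h constant_on UNIV" \<comment> \<open>h is continuous with values in the discrete set 2\<pi>i\<int>\<close>
    proof (rule continuous_discrete_range_constant)
      show "continuous_on UNIV h"
        unfolding h_def by (intro continuous_intros continuous_on_compose2[OF g_cont]) auto
      show "\<exists>e>0. \<forall>y. y \<in> UNIV \<and> h y \<noteq> h x \<longrightarrow> e \<le> norm (h y - h x)" for x
      proof (intro exI[of _ "2 * pi"] conjI allI impI)
        fix y assume "y \<in> UNIV \<and> h y \<noteq> h x"
        show "2 * pi \<le> norm (h y - h x)"
        proof (rule ccontr)
          assume "\<not> 2 * pi \<le> norm (h y - h x)"
          then have "\<bar>Im (h y) - Im (h x)\<bar> < 2 * pi"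
            using abs_Im_le_cmod[of "h y - h x"] by simp
          then have "h y = h x"
            by (rule exp_complex_eqI) (simp add: exp_h)
          with \<open>y \<in> UNIV \<and> h y \<noteq> h x\<close> show False by simp
        qed
      qed simp
    qed simp
    then have "h t = h 0"
      unfolding constant_on_def by (metis UNIV_I)
    then show ?thesis
      by (simp add: h_def)
  qed
  define G where "G = (\<lambda>t. g t - g 0)"
  have "G (s + t) = G s + G t" for s t
    using g_cocycle[of s t] by (simp add: G_def algebra_simps)
  moreover have "continuous_on UNIV G"
    unfolding G_def by (intro continuous_intros g_cont)
  ultimately have G_linear: "G t = t *\<^sub>R G 1" for t
    by (rule additive_continuous_imp_scaleR)
  have "exp (g 0) = 1"
    using hom[of 0 0] nonzero[of 0] by (simp add: u_exp)
  then have u_G: "u t = exp (t *\<^sub>R G 1)" for t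
    unfolding G_linear[symmetric] by (simp add: u_exp G_def exp_diff)
  have "Re (G 1) = 0"
    using norm_u[of 1] u_G[of 1] by simp
  then have "t *\<^sub>R G 1 = \<i> * of_real (Im (G 1) * t)" for t
    by (simp add: complex_eq_iff)
  then have "u t = cis (Im (G 1) * t)" for t
    by (simp add: u_G cis_conv_exp)
  then show thesis
    by (rule that)
qed

lemma vec3_eqI: "(x::real^3) $ 1 = y $ 1 \<Longrightarrow> x $ 2 = y $ 2 \<Longrightarrow> x $ 3 = y $ 3 \<Longrightarrow> x = y"
  by (simp add: vec_eq_iff forall_3)

lemma nil_mult_component [simp]:
  "nil_mult a x $ 1 = a $ 1 + x $ 1"
  "nil_mult a x $ 2 = a $ 2 + x $ 2"
  "nil_mult a x $ 3 = a $ 3 + x $ 3 + (a $ 1 * x $ 2 - a $ 2 * x $ 1) / 2"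
  by (simp_all add: nil_mult_def)

lemma rot_component [simp]:
  "rot u x $ 1 = Re u * x $ 1 - Im u * x $ 2"
  "rot u x $ 2 = Im u * x $ 1 + Re u * x $ 2"
  "rot u x $ 3 = x $ 3"
  by (simp_all add: rot_def)

lemma rot_one [simp]: "rot 1 x = x"
  by (rule vec3_eqI) simp_all

lemma helicoidal_component:
  "fst (helicoidal c (vector [\<beta>1, \<beta>2, 0]) t) $ 1 = \<beta>1 - (cos t * \<beta>1 - sin t * \<beta>2)"
  "fst (helicoidal c (vector [\<beta>1, \<beta>2, 0]) t) $ 2 = \<beta>2 - (sin t * \<beta>1 + cos t * \<beta>2)"
  "fst (helicoidal c (vector [\<beta>1, \<beta>2, 0]) t) $ 3 = t * c - sin t * (\<beta>1\<^sup>2 + \<beta>2\<^sup>2) / 2"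
  "snd (helicoidal c (vector [\<beta>1, \<beta>2, 0]) t) = cis t"
  by (simp_all add: helicoidal_def iso_mult_def nil_inv_def power2_eq_square
      algebra_simps diff_divide_distrib add_divide_distrib)

lemma iso_one_param_add:
  assumes "iso_one_param \<rho>"
  shows "fst (\<rho> (s + t)) = nil_mult (fst (\<rho> s)) (rot (snd (\<rho> s)) (fst (\<rho> t)))"
    and "snd (\<rho> (s + t)) = snd (\<rho> s) * snd (\<rho> t)"
  using assms by (simp_all add: iso_one_param_def iso_mult_def)

lemma iso_one_param_continuous_component:
  assumes "iso_one_param \<rho>"
  shows "continuous_on UNIV (\<lambda>t. fst (\<rho> t) $ i)"
  using assms unfolding iso_one_param_def by (intro continuous_intros) auto

lemma iso_one_param_rescale:
  assumes "iso_one_param \<rho>"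
  shows "iso_one_param (\<lambda>t. \<rho> (k * t))"
proof -
  have "continuous_on UNIV \<rho>"
    using assms by (simp add: iso_one_param_def)
  then have "continuous_on UNIV (\<lambda>t. \<rho> (k * t))"
    by (rule continuous_on_compose2) (simp_all add: continuous_on_mult_left)
  with assms show ?thesis
    unfolding iso_one_param_def by (simp add: distrib_left)
qed

lemma iso_one_param_rotation:
  assumes "iso_one_param \<rho>"
  obtains \<omega> where "\<And>t. snd (\<rho> t) = cis (\<omega> * t)"
proof (rule continuous_circle_homomorphism_eq_cis)
  show "norm (snd (\<rho> t)) = 1" for t
    using assms by (simp add: iso_one_param_def is_iso_def)
  show "snd (\<rho> (s + t)) = snd (\<rho> s) * snd (\<rho> t)" for s t
    using assms by (rule iso_one_param_add)
  show "continuous_on UNIV (\<lambda>t. snd (\<rho> t))"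
    using assms unfolding iso_one_param_def by (intro continuous_intros) auto
qed (rule that)

lemma iso_one_param_translation:
  assumes \<rho>: "iso_one_param \<rho>" and no_rotation: "\<And>t. snd (\<rho> t) = 1"
  shows "\<rho> t = (t *\<^sub>R fst (\<rho> 1), 1)"
proof -
  define v where "v = fst (\<rho> 1)"
  have add: "fst (\<rho> (s + t)) = nil_mult (fst (\<rho> s)) (fst (\<rho> t))" for s t
    using iso_one_param_add(1)[OF \<rho>] by (simp add: no_rotation)
  have linear: "fst (\<rho> t) $ i = t * v $ i"
    if "\<And>s t. fst (\<rho> (s + t)) $ i = fst (\<rho> s) $ i + fst (\<rho> t) $ i" for i t
    using additive_continuous_imp_scaleR[OF that iso_one_param_continuous_component[OF \<rho>], of t]
    by (simp add: v_def)
  have horizontal: "fst (\<rho> t) $ 1 = t * v $ 1" "fst (\<rho> t) $ 2 = t * v $ 2" for t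
    by (rule linear, simp add: add)+
  have "fst (\<rho> t) $ 3 = t * v $ 3"
    by (rule linear) (simp add: add horizontal algebra_simps)
  with horizontal have "fst (\<rho> t) = t *\<^sub>R v"
    by (intro vec3_eqI) simp_all
  then show ?thesis
    by (simp add: prod_eq_iff no_rotation v_def)
qed

lemma iso_one_param_unit_speed_horizontal:
  assumes \<rho>: "iso_one_param \<rho>" and unit_speed: "\<And>t. snd (\<rho> t) = cis t"
  obtains \<beta>1 \<beta>2 where "\<And>t. fst (\<rho> t) $ 1 = \<beta>1 - (cos t * \<beta>1 - sin t * \<beta>2)"
    and "\<And>t. fst (\<rho> t) $ 2 = \<beta>2 - (sin t * \<beta>1 + cos t * \<beta>2)"
proof (rule that)
  \<comment> \<open>Compare a (t + \<pi>) with a (\<pi> + t).\<close>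
  define a where "a = (\<lambda>t. fst (\<rho> t))"
  have add: "a (s + t) $ 1 = a s $ 1 + cos s * a t $ 1 - sin s * a t $ 2"
    "a (s + t) $ 2 = a s $ 2 + sin s * a t $ 1 + cos s * a t $ 2" for s t
    using iso_one_param_add(1)[OF \<rho>, of s t] by (simp_all add: a_def unit_speed)
  show "a t $ 1 = a pi $ 1 / 2 - (cos t * (a pi $ 1 / 2) - sin t * (a pi $ 2 / 2))" for t
    using add(1)[of t pi] add(1)[of pi t] by (simp add: algebra_simps)
  show "a t $ 2 = a pi $ 2 / 2 - (sin t * (a pi $ 1 / 2) + cos t * (a pi $ 2 / 2))" for t
    using add(2)[of t pi] add(2)[of pi t] by (simp add: algebra_simps)
qed

(* The area term (a$1 x$2 - a$2 x$1) of nil_mult for the horizontal parts found above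
   is a coboundary: this is what makes the corrected vertical part additive. *)
lemma helicoidal_horizontal_area:
  fixes \<beta>1 \<beta>2 s t :: real
  shows "(\<beta>1 - (cos s * \<beta>1 - sin s * \<beta>2)) *
           (sin s * (\<beta>1 - (cos t * \<beta>1 - sin t * \<beta>2)) + cos s * (\<beta>2 - (sin t * \<beta>1 + cos t * \<beta>2)))
       - (\<beta>2 - (sin s * \<beta>1 + cos s * \<beta>2)) *
           (cos s * (\<beta>1 - (cos t * \<beta>1 - sin t * \<beta>2)) - sin s * (\<beta>2 - (sin t * \<beta>1 + cos t * \<beta>2)))
       = (sin s + sin t - sin (s + t)) * (\<beta>1\<^sup>2 + \<beta>2\<^sup>2)"
proof -
  have "sin s ^ 2 + cos s ^ 2 = 1" "sin t ^ 2 + cos t ^ 2 = 1"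
    by simp_all
  then show ?thesis
    unfolding sin_add by algebra
qed

lemma iso_one_param_unit_speed_helicoidal:
  assumes \<rho>: "iso_one_param \<rho>" and unit_speed: "\<And>t. snd (\<rho> t) = cis t"
  obtains c \<beta>1 \<beta>2 where "\<And>t. \<rho> t = helicoidal c (vector [\<beta>1, \<beta>2, 0]) t"
proof -
  obtain \<beta>1 \<beta>2 where
    horizontal: "\<And>t. fst (\<rho> t) $ 1 = \<beta>1 - (cos t * \<beta>1 - sin t * \<beta>2)"
      "\<And>t. fst (\<rho> t) $ 2 = \<beta>2 - (sin t * \<beta>1 + cos t * \<beta>2)"
    using iso_one_param_unit_speed_horizontal[OF \<rho> unit_speed] by blast
  define g where "g = (\<lambda>t. fst (\<rho> t) $ 3 + sin t * (\<beta>1\<^sup>2 + \<beta>2\<^sup>2) / 2)"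
  have "fst (\<rho> (s + t)) $ 3 = fst (\<rho> s) $ 3 + fst (\<rho> t) $ 3
          + (sin s + sin t - sin (s + t)) * (\<beta>1\<^sup>2 + \<beta>2\<^sup>2) / 2" for s t
    using iso_one_param_add(1)[OF \<rho>, of s t] helicoidal_horizontal_area[of \<beta>1 s \<beta>2 t]
    by (simp add: unit_speed horizontal)
  then have "g (s + t) = g s + g t" for s t
    by (simp add: g_def field_simps)
  moreover have "continuous_on UNIV g"
    unfolding g_def
    by (intro continuous_on_add iso_one_param_continuous_component[OF \<rho>] continuous_intros) simp
  ultimately have g_linear: "g t = t * g 1" for t
    using additive_continuous_imp_scaleR[of g, of t] by simp
  have "\<rho> t = helicoidal (g 1) (vector [\<beta>1, \<beta>2, 0]) t" for t
  proof (rule prod_eqI)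
    show "fst (\<rho> t) = fst (helicoidal (g 1) (vector [\<beta>1, \<beta>2, 0]) t)"
      using g_linear[of t] by (intro vec3_eqI) (simp_all add: helicoidal_component horizontal g_def)
  qed (simp add: helicoidal_component unit_speed)
  then show thesis
    by (rule that)
qed

lemma iso_one_param_helicoidal_or_translation:
  assumes \<rho>: "iso_one_param \<rho>" and nontrivial: "\<exists>t. \<rho> t \<noteq> iso_one"
  shows "(\<exists>c \<beta>1 \<beta>2 \<omega>. \<omega> \<noteq> 0 \<and> (\<forall>t. \<rho> (t / \<omega>) = helicoidal c (vector [\<beta>1, \<beta>2, 0]) t))
       \<or> (\<exists>v. v \<noteq> 0 \<and> (\<forall>t. \<rho> t = (t *\<^sub>R v, 1)))"
proof -
  obtain \<omega> where rotation: "\<And>t. snd (\<rho> t) = cis (\<omega> * t)"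
    using iso_one_param_rotation[OF \<rho>] by blast
  show ?thesis
  proof (cases "\<omega> = 0")
    case True
    define v where "v = fst (\<rho> 1)"
    have translation: "\<rho> t = (t *\<^sub>R v, 1)" for t
      unfolding v_def by (rule iso_one_param_translation[OF \<rho>]) (simp add: rotation True)
    moreover have "v \<noteq> 0"
    proof
      assume "v = 0"
      then have "\<rho> t = iso_one" for t
        by (simp add: translation iso_one_def)
      with nontrivial show False
        by blast
    qed
    ultimately show ?thesis
      by blast
  next
    case False
    have "iso_one_param (\<lambda>t. \<rho> (t / \<omega>))"
      using iso_one_param_rescale[OF \<rho>, of "1 / \<omega>"] by simp
    moreover have "snd (\<rho> (t / \<omega>)) = cis t" for t
      using rotation False by simp
    ultimately obtain c \<beta>1 \<beta>2 where "\<And>t. \<rho> (t / \<omega>) = helicoidal c (vector [\<beta>1, \<beta>2, 0]) t"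
      by (rule iso_one_param_unit_speed_helicoidal) blast
    with False show ?thesis
      by blast
  qed
qed

lemma rs_aut_one_param_equivariant_image:
  assumes "rs_aut_one_param X A \<gamma>"
    and "\<forall>t. \<forall>p\<in>topspace X. f (\<gamma> t p) = \<Phi> t (f p)"
    and "p \<in> topspace X"
  shows "\<Phi> t (f p) \<in> f ` topspace X"
proof -
  have "continuous_map X X (\<gamma> t)"
    using assms(1) by (simp add: rs_aut_one_param_def rs_automorphism_def rs_holomorphic_def)
  then have "\<gamma> t p \<in> topspace X"
    using assms(3) continuous_map_image_subset_topspace by blast
  then show ?thesis
    using assms(2,3) by (metis image_eqI)
qed

theorem mainTheorem4:
  fixes X :: "'a topology" and A :: "('a set \<times> ('a \<Rightarrow> complex)) set"
    and f :: "'a \<Rightarrow> real^3" and \<gamma> :: "real \<Rightarrow> 'a \<Rightarrow> 'a" and \<rho> :: "real \<Rightarrow> (real^3) \<times> complex"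
  assumes "riemann_surface X A"
    and "conformal_minimal_immersion X A f"
    and "rs_aut_one_param X A \<gamma>"
    and "iso_one_param \<rho>"
    and "\<exists>t. \<rho> t \<noteq> iso_one"
    and "\<forall>t. \<forall>p\<in>topspace X. f (\<gamma> t p) = iso_act (\<rho> t) (f p)"
  shows "(\<exists>c a1 a2. \<forall>t. \<forall>p\<in>topspace X.
            iso_act (helicoidal c (vector [a1, a2, 0]) t) (f p) \<in> f ` topspace X)
       \<or> (\<exists>a1 a2 c. (a1, a2, c) \<noteq> (0, 0, 0) \<and> (\<forall>t. \<forall>p\<in>topspace X.
            nil_mult (vector [t * a1, t * a2, t * c]) (f p) \<in> f ` topspace X))"
proof -
  have orbit: "iso_act (\<rho> t) (f p) \<in> f ` topspace X" if "p \<in> topspace X" for t p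
    using rs_aut_one_param_equivariant_image[OF assms(3,6) that] .
  from iso_one_param_helicoidal_or_translation[OF assms(4,5)] show ?thesis
  proof (elim disjE exE conjE)
    fix c \<beta>1 \<beta>2 \<omega>
    assume helicoidal: "\<forall>t. \<rho> (t / \<omega>) = helicoidal c (vector [\<beta>1, \<beta>2, 0]) t"
    have "iso_act (helicoidal c (vector [\<beta>1, \<beta>2, 0]) t) (f p) \<in> f ` topspace X"
      if "p \<in> topspace X" for t p
      using orbit[OF that, of "t / \<omega>"] helicoidal by simp
    then show ?thesis
      by blast
  next
    fix v :: "real^3"
    assume "v \<noteq> 0" and translation: "\<forall>t. \<rho> t = (t *\<^sub>R v, 1)"
    have "vector [t * v $ 1, t * v $ 2, t * v $ 3] = t *\<^sub>R v" for t
      by (intro vec3_eqI) simp_all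
    then have "\<forall>t. \<forall>p\<in>topspace X. nil_mult (vector [t * v $ 1, t * v $ 2, t * v $ 3]) (f p) \<in> f ` topspace X"
      using orbit translation by (simp add: iso_act_def)
    moreover have "(v $ 1, v $ 2, v $ 3) \<noteq> (0, 0, 0)"
      using \<open>v \<noteq> 0\<close> vec3_eqI[of v 0] by auto
    ultimately show ?thesis
      by blast
  qed
qed

end
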